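(* Let $Q$ be a quantale, $M$ and $N$ left $Q$-modules, and $f:M\to N$ a $Q$-module homomorphism with residuum $f_*:N\to M$ and associated nucleus $\gamma=f_*\circ f$. Then the image $M_\gamma=\gamma[M]$ coincides with the set of $\ker f$-saturated elements of $M$.
   Context: A quantale is a complete lattice with a monoid product distributing over arbitrary joins; a left $Q$-module is a complete lattice $M$ with an associative unital action of $Q$ distributing over joins in each argument; a $Q$-module homomorphism preserves arbitrary joins and the action. The residuum of a join-preserving map $f$ is $f_*(y)=\bigvee\{x\mid f(x)\le y\}$. $\ker f=\{(v,w)\in M^2\mid f(v)=f(w)\}$. For $R\subseteq M^2$, $s\in M$ is $R$-saturated if for all $(v,w)\in R$ and all $a\in Q$: $av\le s$ iff $aw\le s$. *)

theory Defs
  imports Main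
begin

definition quantale :: "('q::complete_lattice \<Rightarrow> 'q \<Rightarrow> 'q) \<Rightarrow> 'q \<Rightarrow> bool" where
  "quantale mult e \<longleftrightarrow>
     (\<forall>a b c. mult (mult a b) c = mult a (mult b c)) \<and>
     (\<forall>a. mult e a = a \<and> mult a e = a) \<and>
     (\<forall>a B. mult a (Sup B) = Sup ((\<lambda>b. mult a b) ` B)) \<and>
     (\<forall>A b. mult (Sup A) b = Sup ((\<lambda>a. mult a b) ` A))"

definition left_module ::
  "('q::complete_lattice \<Rightarrow> 'q \<Rightarrow> 'q) \<Rightarrow> 'q \<Rightarrow> ('q \<Rightarrow> 'm::complete_lattice \<Rightarrow> 'm) \<Rightarrow> bool" where
  "left_module mult e act \<longleftrightarrow>
     (\<forall>a b x. act (mult a b) x = act a (act b x)) \<and>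
     (\<forall>x. act e x = x) \<and>
     (\<forall>a X. act a (Sup X) = Sup (act a ` X)) \<and>
     (\<forall>A x. act (Sup A) x = Sup ((\<lambda>a. act a x) ` A))"

definition module_hom ::
  "('q \<Rightarrow> 'm::complete_lattice \<Rightarrow> 'm) \<Rightarrow> ('q \<Rightarrow> 'n::complete_lattice \<Rightarrow> 'n) \<Rightarrow> ('m \<Rightarrow> 'n) \<Rightarrow> bool" where
  "module_hom actM actN f \<longleftrightarrow>
     (\<forall>X. f (Sup X) = Sup (f ` X)) \<and> (\<forall>a x. f (actM a x) = actN a (f x))"

definition residuum :: "('m::complete_lattice \<Rightarrow> 'n::complete_lattice) \<Rightarrow> 'n \<Rightarrow> 'm" where
  "residuum f y = Sup {x. f x \<le> y}"

definition kernel :: "('m \<Rightarrow> 'n) \<Rightarrow> ('m \<times> 'm) set" where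
  "kernel f = {(v, w). f v = f w}"

definition saturated :: "('q \<Rightarrow> 'm::complete_lattice \<Rightarrow> 'm) \<Rightarrow> ('m \<times> 'm) set \<Rightarrow> 'm \<Rightarrow> bool" where
  "saturated act R s \<longleftrightarrow> (\<forall>(v, w) \<in> R. \<forall>a. act a v \<le> s \<longleftrightarrow> act a w \<le> s)"

end

theory Submission
  imports Defs
begin

text \<open>The residuum is the right adjoint of the join-preserving map \<open>f\<close>, so by
  equivariance \<open>a v \<le> f\<^sub>* (f m)\<close> reads \<open>a (f v) \<le> f m\<close>, which depends
  on \<open>v\<close> only through \<open>f v\<close>; hence every \<open>\<gamma> m\<close> is \<open>ker f\<close>-saturated.
  Conversely \<open>s \<le> \<gamma> s\<close> and \<open>f (\<gamma> s) = f s\<close>, so \<open>(s, \<gamma> s) \<in> ker f\<close>; saturation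
  applied to the unit of \<open>Q\<close> turns \<open>s \<le> s\<close> into \<open>\<gamma> s \<le> s\<close>, hence \<open>s = \<gamma> s\<close>.\<close>

lemma Sup_preserving_mono:
  fixes f :: "'m::complete_lattice \<Rightarrow> 'n::complete_lattice"
  assumes "\<forall>X. f (Sup X) = Sup (f ` X)" and "x \<le> y"
  shows "f x \<le> f y"
proof -
  have "f y = f (Sup {x, y})" using \<open>x \<le> y\<close> by (simp add: sup_absorb2)
  also have "\<dots> = sup (f x) (f y)" using assms(1)[rule_format, of "{x, y}"] by simp
  finally show ?thesis by (metis sup.cobounded1)
qed

lemma le_residuum_iff:
  fixes f :: "'m::complete_lattice \<Rightarrow> 'n::complete_lattice"
  assumes "\<forall>X. f (Sup X) = Sup (f ` X)"
  shows "x \<le> residuum f y \<longleftrightarrow> f x \<le> y"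
proof
  assume "x \<le> residuum f y"
  then have "f x \<le> f (residuum f y)" using Sup_preserving_mono[OF assms] by blast
  also have "\<dots> = Sup (f ` {x. f x \<le> y})" using assms by (simp add: residuum_def)
  also have "\<dots> \<le> y" by (auto intro: Sup_least)
  finally show "f x \<le> y" .
next
  assume "f x \<le> y"
  then show "x \<le> residuum f y" unfolding residuum_def by (auto intro: Sup_upper)
qed

lemma le_residuum_self:
  fixes f :: "'m::complete_lattice \<Rightarrow> 'n::complete_lattice"
  assumes "\<forall>X. f (Sup X) = Sup (f ` X)"
  shows "x \<le> residuum f (f x)"
  using le_residuum_iff[OF assms] by simp

lemma residuum_self_in_kernel:
  fixes f :: "'m::complete_lattice \<Rightarrow> 'n::complete_lattice"
  assumes "\<forall>X. f (Sup X) = Sup (f ` X)"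
  shows "(x, residuum f (f x)) \<in> kernel f"
proof -
  have "f (residuum f (f x)) \<le> f x" using le_residuum_iff[OF assms] by blast
  moreover have "f x \<le> f (residuum f (f x))"
    using Sup_preserving_mono[OF assms le_residuum_self[OF assms]] .
  ultimately show ?thesis by (simp add: kernel_def)
qed

lemma saturated_residuum_kernel:
  assumes "module_hom actM actN f"
  shows "saturated actM (kernel f) (residuum f (f m))"
proof -
  have Sup_f: "\<forall>X. f (Sup X) = Sup (f ` X)" and "\<And>a x. f (actM a x) = actN a (f x)"
    using assms unfolding module_hom_def by auto
  with le_residuum_iff[OF Sup_f] show ?thesis unfolding saturated_def kernel_def by auto
qed

lemma saturated_pair_le:
  assumes "saturated act R s" and "(s, t) \<in> R"
    and "act e s = s" and "act e t = t"
  shows "t \<le> s"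
proof -
  have "act e s \<le> s \<longleftrightarrow> act e t \<le> s"
    using assms(1,2) unfolding saturated_def by blast
  then show ?thesis using assms(3,4) by simp
qed

theorem lemma1p7:
  fixes mult :: "'q::complete_lattice \<Rightarrow> 'q \<Rightarrow> 'q" and e :: 'q
    and actM :: "'q \<Rightarrow> 'm::complete_lattice \<Rightarrow> 'm"
    and actN :: "'q \<Rightarrow> 'n::complete_lattice \<Rightarrow> 'n"
    and f :: "'m \<Rightarrow> 'n"
  assumes "quantale mult e"
    and "left_module mult e actM"
    and "left_module mult e actN"
    and "module_hom actM actN f"
  shows "(residuum f \<circ> f) ` UNIV = {s. saturated actM (kernel f) s}"
proof (intro equalityI subsetI)
  fix s assume "s \<in> (residuum f \<circ> f) ` UNIV"
  then show "s \<in> {s. saturated actM (kernel f) s}"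
    using saturated_residuum_kernel[OF assms(4)] by auto
next
  fix s assume "s \<in> {s. saturated actM (kernel f) s}"
  have Sup_f: "\<forall>X. f (Sup X) = Sup (f ` X)" using assms(4) by (simp add: module_hom_def)
  have unit: "\<And>x. actM e x = x" using assms(2) by (simp add: left_module_def)
  have "residuum f (f s) \<le> s"
    using saturated_pair_le \<open>s \<in> _\<close> residuum_self_in_kernel[OF Sup_f] unit by fastforce
  then have "s = residuum f (f s)" using le_residuum_self[OF Sup_f] by (rule antisym[rotated])
  then show "s \<in> (residuum f \<circ> f) ` UNIV" by auto
qed

end
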